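(* Let $n\ge 2$, let $v_1<\cdots<v_{n-1}$ be positive integers with $\mathrm{ML}(v_1,\ldots,v_{n-1})\ge L$, and fix $0<\varepsilon<L$. Then for every positive integer $v_n$ with $v_n\ge \left(\frac{L-\varepsilon}{\varepsilon}\right)v_{n-1}$, we have $\mathrm{ML}(v_1,\ldots,v_n)\ge L-\varepsilon$.
   Context: For a real number $x$, $\Vert x\Vert$ denotes the distance from $x$ to the nearest integer. For positive integers $v_1,\ldots,v_k$, the maximum loneliness is $\mathrm{ML}(v_1,\ldots,v_k)=\max_{t\in\mathbb{R}}\min_{1\le i\le k}\Vert t v_i\Vert$. *)

theory Defs
  imports "HOL-Analysis.Analysis"
begin

definition dist_int :: "real \<Rightarrow> real" where
  "dist_int x = (INF m\<in>(\<int>::real set). \<bar>x - m\<bar>)"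

text \<open>The maximum is attained (continuous periodic function), so Sup equals max.\<close>
definition max_lonely :: "nat list \<Rightarrow> real" where
  "max_lonely vs = (SUP t\<in>(UNIV::real set). Min ((\<lambda>v. dist_int (t * real v)) ` set vs))"

end

(* Take t0 nearly optimal for v_1, ..., v_(n-1) and c = L - \<epsilon> \<le> 1/2. Moving t0 by at most
   c / v_n reaches a t with ||t v_n|| \<ge> c, and this moves each t v_i (i < n) by at most
   c v_(n-1) / v_n \<le> \<epsilon>; since ||.|| is 1-Lipschitz, ||t v_i|| \<ge> L - \<epsilon> up to the
   slack in the choice of t0. *)

theory Submission
  imports Defs
begin

lemma dist_int_eq_round: "dist_int x = \<bar>x - of_int (round x)\<bar>"
  unfolding dist_int_def
proof (rule antisym)
  show "(INF m\<in>(\<int>::real set). \<bar>x - m\<bar>) \<le> \<bar>x - of_int (round x)\<bar>"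
    by (rule cINF_lower2[where x="of_int (round x)"]) (auto intro: bdd_belowI[of _ 0])
  show "\<bar>x - of_int (round x)\<bar> \<le> (INF m\<in>(\<int>::real set). \<bar>x - m\<bar>)"
    by (rule cINF_greatest) (auto elim!: Ints_cases simp: round_diff_minimal)
qed

lemma dist_int_le: "dist_int x \<le> \<bar>x - of_int m\<bar>"
  by (simp add: dist_int_eq_round round_diff_minimal)

lemma dist_int_le_half: "dist_int x \<le> 1/2"
  using of_int_round_abs_le[of x] by (simp add: dist_int_eq_round abs_minus_commute)

lemma dist_int_lipschitz: "dist_int x \<le> dist_int y + \<bar>x - y\<bar>"
proof -
  have "dist_int x \<le> \<bar>x - of_int (round y)\<bar>"
    by (rule dist_int_le)
  also have "\<dots> \<le> \<bar>y - of_int (round y)\<bar> + \<bar>x - y\<bar>"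
    by simp
  finally show ?thesis
    by (simp add: dist_int_eq_round)
qed

lemma dist_int_of_int_add:
  assumes "\<bar>c\<bar> \<le> 1/2"
  shows "dist_int (of_int k + c) = \<bar>c\<bar>"
proof (rule antisym)
  show "dist_int (of_int k + c) \<le> \<bar>c\<bar>"
    using dist_int_le[of "of_int k + c" k] by simp
  define j where "j = k - round (of_int k + c)"
  have "\<bar>c\<bar> \<le> \<bar>of_int j + c\<bar>"
  proof (cases "j = 0")
    case False
    then have "1 \<le> \<bar>real_of_int j\<bar>"
      by linarith
    then show ?thesis
      using assms by linarith
  qed simp
  then show "\<bar>c\<bar> \<le> dist_int (of_int k + c)"
    by (simp add: dist_int_eq_round j_def)
qed

lemma exists_near_dist_int_ge:
  fixes y c :: real
  assumes "0 \<le> c" "c \<le> 1/2"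
  obtains x where "\<bar>x - y\<bar> \<le> c" "c \<le> dist_int x"
proof (cases "c \<le> dist_int y")
  case True
  then show ?thesis
    using assms that[of y] by simp
next
  case False
  define r where "r = y - of_int (round y)"
  define x where "x = of_int (round y) + (if r \<ge> 0 then c else - c)"
  have "\<bar>r\<bar> < c"
    using False by (simp add: dist_int_eq_round r_def)
  then have "\<bar>x - y\<bar> \<le> c"
    by (simp add: x_def r_def)
  moreover have "dist_int x = c"
    using assms by (simp add: x_def dist_int_of_int_add)
  ultimately show ?thesis
    using that by simp
qed

lemma Min_dist_int_le_half:
  assumes "vs \<noteq> []"
  shows "Min ((\<lambda>v. dist_int (t * real v)) ` set vs) \<le> 1/2"
proof -
  from assms obtain u where "u \<in> set vs"
    by (cases vs) auto
  then have "Min ((\<lambda>v. dist_int (t * real v)) ` set vs) \<le> dist_int (t * real u)"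
    by simp
  then show ?thesis
    using dist_int_le_half order_trans by blast
qed

lemma max_lonely_bdd_above:
  "vs \<noteq> [] \<Longrightarrow> bdd_above ((\<lambda>t. Min ((\<lambda>v. dist_int (t * real v)) ` set vs)) ` UNIV)"
  using Min_dist_int_le_half by (intro bdd_aboveI[of _ "1/2"]) blast

lemma max_lonely_le_half: "vs \<noteq> [] \<Longrightarrow> max_lonely vs \<le> 1/2"
  unfolding max_lonely_def by (rule cSUP_least) (use Min_dist_int_le_half in blast)+

lemma le_max_lonelyI:
  assumes "vs \<noteq> []" "\<And>v. v \<in> set vs \<Longrightarrow> a \<le> dist_int (t * real v)"
  shows "a \<le> max_lonely vs"
proof -
  have "a \<le> Min ((\<lambda>v. dist_int (t * real v)) ` set vs)"
    using assms by (simp add: Min_ge_iff)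
  also have "\<dots> \<le> max_lonely vs"
    unfolding max_lonely_def by (rule cSUP_upper[OF _ max_lonely_bdd_above[OF assms(1)]]) simp
  finally show ?thesis .
qed

lemma less_max_lonelyD:
  assumes "vs \<noteq> []" "a < max_lonely vs"
  obtains t where "\<And>v. v \<in> set vs \<Longrightarrow> a < dist_int (t * real v)"
proof -
  obtain t where "a < Min ((\<lambda>v. dist_int (t * real v)) ` set vs)"
    using assms less_cSUP_iff[OF _ max_lonely_bdd_above[OF assms(1)]]
    unfolding max_lonely_def by auto
  then show ?thesis
    using that assms(1) by (simp add: Min_gr_iff) blast
qed

lemma max_lonely_snoc_ge:
  fixes vs :: "nat list" and w :: nat and m c \<epsilon> :: real
  assumes "vs \<noteq> []" "\<And>u. u \<in> set vs \<Longrightarrow> real u \<le> m" "w > 0"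
    and "0 \<le> c" "c \<le> 1/2" "c * m \<le> \<epsilon> * real w"
  shows "min c (max_lonely vs - \<epsilon>) \<le> max_lonely (vs @ [w])"
proof (rule dense_le)
  fix a
  assume "a < min c (max_lonely vs - \<epsilon>)"
  then have "a < c" "a + \<epsilon> < max_lonely vs"
    by auto
  then obtain t0 where t0: "\<And>u. u \<in> set vs \<Longrightarrow> a + \<epsilon> < dist_int (t0 * real u)"
    using less_max_lonelyD[OF assms(1)] by blast
  obtain x where x: "\<bar>x - t0 * real w\<bar> \<le> c" "c \<le> dist_int x"
    using exists_near_dist_int_ge assms(4,5) by blast
  define t where "t = x / real w"
  have tw: "t * real w = x"
    using assms(3) by (simp add: t_def)
  have shift: "\<bar>t - t0\<bar> * real w \<le> c"
    using x(1) by (simp add: tw [symmetric] abs_mult left_diff_distrib [symmetric])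
  show "a \<le> max_lonely (vs @ [w])"
  proof (rule le_max_lonelyI)
    fix u
    assume "u \<in> set (vs @ [w])"
    then consider "u = w" | "u \<in> set vs"
      by auto
    then show "a \<le> dist_int (t * real u)"
    proof cases
      case 1
      then show ?thesis
        using x(2) \<open>a < c\<close> tw by simp
    next
      case 2
      have "\<bar>t - t0\<bar> * real u * real w = (\<bar>t - t0\<bar> * real w) * real u"
        by simp
      also have "\<dots> \<le> c * real u"
        using shift by (rule mult_right_mono) simp
      also have "\<dots> \<le> c * m"
        using assms(2)[OF 2] assms(4) by (rule mult_left_mono)
      also have "\<dots> \<le> \<epsilon> * real w"
        by (fact assms(6))
      finally have "\<bar>t * real u - t0 * real u\<bar> \<le> \<epsilon>"
        using assms(3) by (simp add: abs_mult left_diff_distrib [symmetric])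
      then show ?thesis
        using dist_int_lipschitz[of "t0 * real u" "t * real u"] t0[OF 2]
        by (simp add: abs_minus_commute)
    qed
  qed simp
qed

theorem proposition8p1:
  fixes n :: nat and v :: "nat \<Rightarrow> nat" and L \<epsilon> :: real
  assumes "n \<ge> 2"
    and "\<forall>i\<in>{1..n}. v i > 0"
    and "\<forall>i j. 1 \<le> i \<and> i < j \<and> j \<le> n - 1 \<longrightarrow> v i < v j"
    and "max_lonely (map v [1..<n]) \<ge> L"
    and "0 < \<epsilon>" and "\<epsilon> < L"
    and "real (v n) \<ge> ((L - \<epsilon>) / \<epsilon>) * real (v (n - 1))"
  shows "max_lonely (map v [1..<n+1]) \<ge> L - \<epsilon>"
proof -
  let ?vs = "map v [1..<n]"
  have ne: "?vs \<noteq> []"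
    using assms(1) by simp
  have snoc: "map v [1..<n+1] = ?vs @ [v n]"
    using assms(1) by simp
  have le_last: "real u \<le> real (v (n - 1))" if "u \<in> set ?vs" for u
  proof -
    from that obtain i where "1 \<le> i" "i \<le> n - 1" "u = v i"
      by auto
    then show ?thesis
      using assms(3) by (cases "i = n - 1") (auto intro: less_imp_le)
  qed
  have "L - \<epsilon> \<le> 1/2"
    using max_lonely_le_half[OF ne] assms(4,5) by linarith
  moreover have "(L - \<epsilon>) * real (v (n - 1)) \<le> \<epsilon> * real (v n)"
    using assms(5,7) by (simp add: field_simps)
  ultimately have "min (L - \<epsilon>) (max_lonely ?vs - \<epsilon>) \<le> max_lonely (?vs @ [v n])"
    using max_lonely_snoc_ge[OF ne le_last] assms(1,2,6) by simp
  then show ?thesis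
    using assms(4) snoc by simp
qed

end
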